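(* Let $\mathcal{B}\subseteq\mathcal{C}^n$. Then for every $k\in\mathbb{N}$, every $R\in\mathbb{R}^{n\times k}$ and every $f\in\mathbb{R}^n\setminus\mathbb{Z}^n$, one has $C_{\mathcal{B}}(R,f)=C_{\operatorname{cl}_f(\mathcal{B}_f)}(R,f)$.
   Context: $\mathcal{C}^n$ is the family of all $n$-dimensional closed convex subsets of $\mathbb{R}^n$; $\mathcal{C}^n_f$ is the subfamily containing $f$ in the interior, and $\mathcal{B}_f=\mathcal{B}\cap\mathcal{C}^n_f$. For $B\in\mathcal{C}^n$ with $0\in\operatorname{int}(B)$, $\psi_B(r)=\inf\{\lambda>0:r\in\lambda B\}$. For $R=(r_1,\dots,r_k)$ and $B\in\mathcal{C}^n$: if $f\in\operatorname{int}(B)$, $C_B(R,f)=\{s\in\mathbb{R}^k_{\ge0}:\sum_j s_j\psi_{B-f}(r_j)\ge1\}$, otherwise $C_B(R,f)=\mathbb{R}^k_{\ge0}$; $C_{\mathcal{B}}(R,f)=\bigcap_{B\in\mathcal{B}}C_B(R,f)$ ($=\mathbb{R}^k_{\ge0}$ if the family is empty). The polar of $X$ is $X^\circ=\{r:r\cdot x\le1\ \forall x\in X\}$; the $f$-metric on $\mathcal{C}^n_f$ is $d_f(B_1,B_2)=d_H((B_1-f)^\circ,(B_2-f)^\circ)$ with $d_H$ the Hausdorff metric; $\operatorname{cl}_f(\mathcal{A})$ denotes the closure of $\mathcal{A}\subseteq\mathcal{C}^n_f$ in $\mathcal{C}^n_f$ with respect to $d_f$. *)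

theory Defs
  imports "HOL-Analysis.Analysis"
begin

definition convex_bodies :: "('a::euclidean_space) set set" where
  "convex_bodies = {B. closed B \<and> convex B \<and> aff_dim B = int DIM('a)}"

definition convex_bodies_at :: "'a::euclidean_space \<Rightarrow> 'a set set" where
  "convex_bodies_at f = {B \<in> convex_bodies. f \<in> interior B}"

definition gauge_fn :: "'a::euclidean_space set \<Rightarrow> 'a \<Rightarrow> real" where
  "gauge_fn B r = Inf {t. t > 0 \<and> r \<in> (\<lambda>x. t *\<^sub>R x) ` B}"

definition polar :: "'a::euclidean_space set \<Rightarrow> 'a set" where
  "polar X = {r. \<forall>x\<in>X. inner r x \<le> 1}"

text \<open>Hausdorff distance (used on nonempty compact sets).\<close>
definition hausdorff_dist :: "'a::euclidean_space set \<Rightarrow> 'a set \<Rightarrow> real" where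
  "hausdorff_dist A B = max (SUP a\<in>A. infdist a B) (SUP b\<in>B. infdist b A)"

definition f_metric :: "'a::euclidean_space \<Rightarrow> 'a set \<Rightarrow> 'a set \<Rightarrow> real" where
  "f_metric f B1 B2 = hausdorff_dist (polar ((\<lambda>x. x - f) ` B1)) (polar ((\<lambda>x. x - f) ` B2))"

definition cl_f :: "'a::euclidean_space \<Rightarrow> 'a set set \<Rightarrow> 'a set set" where
  "cl_f f A = {B \<in> convex_bodies_at f. \<forall>\<epsilon>>0. \<exists>A'\<in>A. f_metric f B A' < \<epsilon>}"

text \<open>C_B(R,f) for a single convex set B; R = (r_1,...,r_k) is a list of k vectors,
  points s of R^k are lists of length k.\<close>
definition C_set :: "'a::euclidean_space set \<Rightarrow> 'a list \<Rightarrow> 'a \<Rightarrow> real list set" where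
  "C_set B R f =
     (if f \<in> interior B
      then {s. length s = length R \<and> (\<forall>j<length s. s ! j \<ge> 0) \<and>
               (\<Sum>j<length R. s ! j * gauge_fn ((\<lambda>x. x - f) ` B) (R ! j)) \<ge> 1}
      else {s. length s = length R \<and> (\<forall>j<length s. s ! j \<ge> 0)})"

definition C_family :: "'a::euclidean_space set set \<Rightarrow> 'a list \<Rightarrow> 'a \<Rightarrow> real list set" where
  "C_family \<B> R f =
     {s. length s = length R \<and> (\<forall>j<length s. s ! j \<ge> 0)} \<inter> (\<Inter>B\<in>\<B>. C_set B R f)"

end

theory Submission
  imports Defs
begin

text \<open>For K closed, convex and containing a ball around 0, the gauge of K is the support
  function of its polar: \<open>gauge_fn K r = (SUP y\<in>polar K. r \<bullet> y)\<close>. Hence, if the polar of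
  A - f lies within Hausdorff distance e of that of B - f, the gauge of B - f at r is at least
  that of A - f minus about e |r|. So every inequality \<open>\<Sum>j. s\<^sub>j \<psi>(r\<^sub>j) \<ge> 1\<close> valid for all A
  in a family survives for its d_f-limits; conversely the family lies in its closure, and
  members not containing f in their interior impose no constraint.\<close>

lemma infdist_less_imp_dist_less:
  fixes A :: "'a::metric_space set"
  assumes "A \<noteq> {}" "infdist y A < e"
  shows "\<exists>z\<in>A. dist y z < e"
proof -
  have "(INF a\<in>A. dist y a) < e" using assms(2) unfolding infdist_notempty[OF assms(1)] .
  moreover have "bdd_below ((\<lambda>a. dist y a) ` A)" by (rule bdd_belowI[of _ 0]) auto
  ultimately show ?thesis using cINF_less_iff[OF assms(1), of "\<lambda>a. dist y a" e] by blast
qed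

lemma zero_in_polar [simp]: "0 \<in> polar X"
  unfolding polar_def by simp

lemma norm_le_of_polar_of_ball_subset:
  fixes K :: "'a::euclidean_space set"
  assumes "d > 0" "ball 0 d \<subseteq> K" "y \<in> polar K"
  shows "norm y \<le> 2 / d"
proof (cases "y = 0")
  case True then show ?thesis using assms by simp
next
  case False
  let ?x = "((d/2) / norm y) *\<^sub>R y"
  have "norm ?x = d/2" using False assms by simp
  then have "?x \<in> K" using assms by auto
  then have "inner y ?x \<le> 1" using assms(3) unfolding polar_def by auto
  moreover have "inner y ?x = (d/2) * norm y"
    using False by (simp add: dot_square_norm power2_eq_square)
  ultimately have "(d/2) * norm y \<le> 1" by linarith
  then show ?thesis using assms(1) by (simp add: field_simps)
qed

lemma ex_scaled_mem_of_ball_subset: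
  fixes K :: "'a::euclidean_space set"
  assumes "d > 0" "ball 0 d \<subseteq> K"
  shows "\<exists>t>0. r \<in> (\<lambda>x. t *\<^sub>R x) ` K"
proof -
  define t where "t = 2 * norm r / d + 1"
  have t_pos: "t > 0" unfolding t_def using assms(1) by (simp add: add_nonneg_pos)
  have "d * t = 2 * norm r + d" unfolding t_def using assms(1) by (simp add: field_simps)
  then have "norm r < d * t" using assms(1) norm_ge_zero[of r] by linarith
  then have "norm ((1/t) *\<^sub>R r) < d" using t_pos by (simp add: field_simps)
  then have "(1/t) *\<^sub>R r \<in> K" using assms by auto
  moreover have "r = t *\<^sub>R ((1/t) *\<^sub>R r)" using t_pos by simp
  ultimately show ?thesis using t_pos by blast
qed

lemma inner_le_gauge_fn_of_polar:
  fixes K :: "'a::euclidean_space set"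
  assumes "d > 0" "ball 0 d \<subseteq> K" "z \<in> polar K"
  shows "inner r z \<le> gauge_fn K r"
  unfolding gauge_fn_def
proof (rule cInf_greatest)
  show "{t. t > 0 \<and> r \<in> (\<lambda>x. t *\<^sub>R x) ` K} \<noteq> {}"
    using ex_scaled_mem_of_ball_subset[OF assms(1,2)] by auto
next
  fix t assume "t \<in> {t. t > 0 \<and> r \<in> (\<lambda>x. t *\<^sub>R x) ` K}"
  then obtain x where t: "t > 0" "x \<in> K" "r = t *\<^sub>R x" by auto
  then have "inner z x \<le> 1" using assms(3) unfolding polar_def by auto
  then show "inner r z \<le> t" using t by (simp add: inner_commute mult_left_le)
qed

lemma gauge_fn_le_inner_polar_plus:
  fixes K :: "'a::euclidean_space set"
  assumes "d > 0" "ball 0 d \<subseteq> K" "closed K" "convex K" "\<eta> > 0"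
  shows "\<exists>y\<in>polar K. gauge_fn K r \<le> inner r y + \<eta>"
proof (cases "gauge_fn K r - \<eta> \<le> 0")
  case True
  then show ?thesis by (intro bexI[of _ 0]) auto
next
  case False
  define t where "t = gauge_fn K r - \<eta>"
  have t_pos: "t > 0" using False t_def by simp
  have "(1/t) *\<^sub>R r \<notin> K"
  proof
    assume "(1/t) *\<^sub>R r \<in> K"
    moreover have "r = t *\<^sub>R ((1/t) *\<^sub>R r)" using t_pos by simp
    ultimately have "t \<in> {t. t > 0 \<and> r \<in> (\<lambda>x. t *\<^sub>R x) ` K}" using t_pos by blast
    moreover have "bdd_below {t. t > 0 \<and> r \<in> (\<lambda>x. t *\<^sub>R x) ` K}"
      by (rule bdd_belowI[of _ 0]) auto
    ultimately have "gauge_fn K r \<le> t" unfolding gauge_fn_def by (rule cInf_lower)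
    then show False using t_def assms(5) by simp
  qed
  then obtain a b where ab: "inner a ((1/t) *\<^sub>R r) < b" "\<forall>x\<in>K. inner a x > b"
    using separating_hyperplane_closed_point[OF assms(4,3)] by blast
  have "0 \<in> K" using assms(1,2) by auto
  then have b_neg: "b < 0" using ab(2) by force
  define y where "y = (1/b) *\<^sub>R a"
  have "y \<in> polar K"
    unfolding polar_def y_def using ab(2) b_neg by (auto simp: field_simps)
  moreover have "inner r y > t"
  proof -
    have "inner a r < b * t" using ab(1) t_pos by (simp add: inner_commute field_simps)
    then have "inner a r / b > t" using b_neg by (simp add: field_simps)
    then show ?thesis unfolding y_def by (simp add: inner_commute)
  qed
  ultimately show ?thesis unfolding t_def by (intro bexI[of _ y]) auto
qed

lemma ball_subset_translation_of_interior:
  fixes B :: "'a::euclidean_space set"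
  assumes "f \<in> interior B"
  shows "\<exists>d>0. ball 0 d \<subseteq> (\<lambda>x. x - f) ` B"
proof -
  obtain d where d: "d > 0" "ball f d \<subseteq> B" using assms mem_interior by blast
  have "ball 0 d \<subseteq> (\<lambda>x. x - f) ` B"
  proof
    fix x :: 'a assume "x \<in> ball 0 d"
    then have "x + f \<in> B" using d by (auto simp: dist_norm)
    then show "x \<in> (\<lambda>x. x - f) ` B" by (intro image_eqI[of _ _ "x + f"]) auto
  qed
  then show ?thesis using d by blast
qed

lemma gauge_fn_le_of_f_metric_less:
  fixes B A :: "'a::euclidean_space set"
  assumes B: "B \<in> convex_bodies_at f" and A: "A \<in> convex_bodies_at f"
    and close: "f_metric f B A < e" and e: "e > 0"
  shows "gauge_fn ((\<lambda>x. x - f) ` A) r \<le> gauge_fn ((\<lambda>x. x - f) ` B) r + e * (norm r + 1)"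
proof -
  define KA where "KA = (\<lambda>x. x - f) ` A"
  define KB where "KB = (\<lambda>x. x - f) ` B"
  obtain dA where dA: "dA > 0" "ball 0 dA \<subseteq> KA"
    using ball_subset_translation_of_interior[of f A] A
    unfolding convex_bodies_at_def KA_def by auto
  obtain dB where dB: "dB > 0" "ball 0 dB \<subseteq> KB"
    using ball_subset_translation_of_interior[of f B] B
    unfolding convex_bodies_at_def KB_def by auto
  have "closed KA" "convex KA"
    using A unfolding KA_def convex_bodies_at_def convex_bodies_def
    by (auto intro: closed_translation_subtract)
  then obtain y where y: "y \<in> polar KA" "gauge_fn KA r \<le> inner r y + e"
    using gauge_fn_le_inner_polar_plus[OF dA _ _ e] by blast
  have "bdd_above ((\<lambda>b. infdist b (polar KB)) ` polar KA)"
  proof (rule bdd_aboveI[of _ "2/dA"])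
    fix x assume "x \<in> (\<lambda>b. infdist b (polar KB)) ` polar KA"
    then obtain b where b: "b \<in> polar KA" "x = infdist b (polar KB)" by auto
    then have "x \<le> dist b 0" using infdist_le zero_in_polar by metis
    then show "x \<le> 2/dA" using norm_le_of_polar_of_ball_subset[OF dA b(1)] by simp
  qed
  then have "infdist y (polar KB) \<le> (SUP b\<in>polar KA. infdist b (polar KB))"
    using cSUP_upper[OF y(1)] by blast
  also have "\<dots> \<le> f_metric f B A"
    unfolding f_metric_def hausdorff_dist_def KA_def KB_def by simp
  finally have "infdist y (polar KB) < e" using close by simp
  then obtain z where z: "z \<in> polar KB" "dist y z < e"
    using infdist_less_imp_dist_less[of "polar KB" y e] zero_in_polar by blast
  have "inner r y - inner r z \<le> norm r * norm (y - z)"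
    using norm_cauchy_schwarz[of r "y - z"] by (simp add: inner_diff_right)
  also have "\<dots> \<le> norm r * e" using z(2) by (simp add: dist_norm mult_left_mono)
  finally have "inner r y \<le> inner r z + norm r * e" by simp
  moreover have "inner r z \<le> gauge_fn KB r" using inner_le_gauge_fn_of_polar[OF dB z(1)] .
  ultimately show ?thesis using y(2) unfolding KA_def[symmetric] KB_def[symmetric]
    by (simp add: algebra_simps)
qed

lemma f_metric_self: "f_metric f B B = 0"
proof -
  have "polar ((\<lambda>x. x - f) ` B) \<noteq> {}" using zero_in_polar by blast
  then show ?thesis unfolding f_metric_def hausdorff_dist_def by simp
qed

lemma subset_cl_f:
  assumes "\<A> \<subseteq> convex_bodies_at f"
  shows "\<A> \<subseteq> cl_f f \<A>"
proof
  fix B assume "B \<in> \<A>"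
  then show "B \<in> cl_f f \<A>"
    using assms unfolding cl_f_def by (auto intro!: bexI[of _ B] simp: f_metric_self)
qed

lemma mem_C_set_of_mem_cl_f:
  assumes \<A>: "\<A> \<subseteq> convex_bodies_at f" and B: "B \<in> cl_f f \<A>"
    and s: "length s = length R" "\<forall>j<length s. s ! j \<ge> 0"
    and s_A: "\<forall>A\<in>\<A>. s \<in> C_set A R f"
  shows "s \<in> C_set B R f"
proof -
  let ?g = "\<lambda>B r. gauge_fn ((\<lambda>x. x - f) ` B) r"
  have B_body: "B \<in> convex_bodies_at f" using B unfolding cl_f_def by auto
  define S where "S = (\<Sum>j<length R. s ! j * (norm (R ! j) + 1))"
  have "S \<ge> 0" unfolding S_def using s by (intro sum_nonneg) auto
  have "1 \<le> (\<Sum>j<length R. s ! j * ?g B (R ! j))"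
  proof (rule field_le_epsilon)
    fix e :: real assume "e > 0"
    define \<delta> where "\<delta> = e / (S + 1)"
    have "\<delta> > 0" using \<open>e > 0\<close> \<open>S \<ge> 0\<close> unfolding \<delta>_def by simp
    then obtain A where A: "A \<in> \<A>" "f_metric f B A < \<delta>"
      using B unfolding cl_f_def by blast
    then have A_body: "A \<in> convex_bodies_at f" using \<A> by auto
    then have "1 \<le> (\<Sum>j<length R. s ! j * ?g A (R ! j))"
      using s_A A(1) unfolding C_set_def convex_bodies_at_def by auto
    also have "\<dots> \<le> (\<Sum>j<length R. s ! j * (?g B (R ! j) + \<delta> * (norm (R ! j) + 1)))"
      using s gauge_fn_le_of_f_metric_less[OF B_body A_body A(2) \<open>\<delta> > 0\<close>]
      by (intro sum_mono mult_left_mono) auto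
    also have "\<dots> = (\<Sum>j<length R. s ! j * ?g B (R ! j)) + \<delta> * S"
      unfolding S_def by (simp add: sum.distrib sum_distrib_left algebra_simps)
    also have "\<delta> * S \<le> e"
      using \<open>e > 0\<close> \<open>S \<ge> 0\<close> unfolding \<delta>_def by (simp add: field_simps)
    finally show "1 \<le> (\<Sum>j<length R. s ! j * ?g B (R ! j)) + e" by simp
  qed
  then show ?thesis using s B_body unfolding C_set_def convex_bodies_at_def by auto
qed

lemma C_family_cl_f:
  assumes "\<A> \<subseteq> convex_bodies_at f"
  shows "C_family (cl_f f \<A>) R f = C_family \<A> R f"
proof
  show "C_family (cl_f f \<A>) R f \<subseteq> C_family \<A> R f"
    using subset_cl_f[OF assms] unfolding C_family_def by blast
  show "C_family \<A> R f \<subseteq> C_family (cl_f f \<A>) R f"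
    using mem_C_set_of_mem_cl_f[OF assms] unfolding C_family_def by blast
qed

lemma C_family_Int_convex_bodies_at:
  assumes "\<B> \<subseteq> convex_bodies"
  shows "C_family (\<B> \<inter> convex_bodies_at f) R f = C_family \<B> R f"
  using assms unfolding C_family_def C_set_def convex_bodies_at_def by auto

theorem proposition3p8:
  fixes \<B> :: "(real^'n) set set" and R :: "(real^'n) list" and f :: "real^'n"
  assumes "\<B> \<subseteq> convex_bodies"
    and "\<exists>i. f $ i \<notin> \<int>"
  shows "C_family \<B> R f = C_family (cl_f f (\<B> \<inter> convex_bodies_at f)) R f"
  using assms(1) by (simp add: C_family_cl_f C_family_Int_convex_bodies_at)

end
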